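(* Let $f\in A[X]$ be monic with discriminant $\Delta=\mathrm{Res}_X(f,f')\neq 0$, $r=v(\Delta)$, and let $N>2r$ be an integer. Let $f_N\in(A/\pi^NA)[X]$ be the reduction of $f$ modulo $\pi^N$ and $S_N\subseteq A/\pi^NA$ its set of roots. Then every root of $f$ in $K$ lies in $A$, and the map $x\mapsto[\overline{x}]$ (where $\overline{x}$ is the reduction of $x$ modulo $\pi^NA$ and $[\cdot]$ the $\approx$-class) is a bijection from the set of roots of $f$ in $K$ onto $S_N/\approx$. In particular, the number of roots of $f$ in $K$ equals $|S_N/\approx|$.
   Context: $K$ is a field complete with respect to a non-archimedean discrete valuation $v$, normalized by $v(\pi)=1$ for a uniformizer $\pi$ of the valuation ring $A=\{x\in K: v(x)\geq 0\}$; the residue field $A/\pi A$ is finite. The equivalence relation $\approx$ on $S_N$ is: $x\approx y$ iff either $N\leq r$ and $x=y$, or $N>r$ and $x\equiv y \pmod{\overline{\pi}^{\,r+1}}$, where $\overline{\pi}$ is the image of $\pi$ in $A/\pi^NA$. *)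

theory Defs
  imports "Subresultants.Resultant_Prelim"
begin

text \<open>A normalized discrete valuation on a field 'a, given on nonzero elements
  (the value at 0, conventionally infinity, is never used).\<close>
definition discrete_valuation :: "('a::field \<Rightarrow> int) \<Rightarrow> bool" where
  "discrete_valuation v \<longleftrightarrow>
     (\<forall>x y. x \<noteq> 0 \<longrightarrow> y \<noteq> 0 \<longrightarrow> v (x * y) = v x + v y) \<and>
     (\<forall>x y. x \<noteq> 0 \<longrightarrow> y \<noteq> 0 \<longrightarrow> x + y \<noteq> 0 \<longrightarrow> min (v x) (v y) \<le> v (x + y))"

definition valring :: "('a::field \<Rightarrow> int) \<Rightarrow> 'a set" where
  "valring v = {x. x = 0 \<or> 0 \<le> v x}"

definition val_complete :: "('a::field \<Rightarrow> int) \<Rightarrow> bool" where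
  "val_complete v \<longleftrightarrow>
     (\<forall>s :: nat \<Rightarrow> 'a.
        (\<forall>n::int. \<exists>M. \<forall>i\<ge>M. \<forall>j\<ge>M. s i = s j \<or> n \<le> v (s i - s j)) \<longrightarrow>
        (\<exists>L. \<forall>n::int. \<exists>M. \<forall>i\<ge>M. s i = L \<or> n \<le> v (s i - L)))"

definition pideal :: "('a::field \<Rightarrow> int) \<Rightarrow> 'a \<Rightarrow> nat \<Rightarrow> 'a set" where
  "pideal v \<pi> N = (\<lambda>c. \<pi> ^ N * c) ` valring v"

definition modrel :: "('a::field \<Rightarrow> int) \<Rightarrow> 'a \<Rightarrow> nat \<Rightarrow> ('a \<times> 'a) set" where
  "modrel v \<pi> N = {(a, b). a \<in> valring v \<and> b \<in> valring v \<and> a - b \<in> pideal v \<pi> N}"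

definition quot_ring :: "('a::field \<Rightarrow> int) \<Rightarrow> 'a \<Rightarrow> nat \<Rightarrow> 'a set set" where
  "quot_ring v \<pi> N = valring v // modrel v \<pi> N"

definition red :: "('a::field \<Rightarrow> int) \<Rightarrow> 'a \<Rightarrow> nat \<Rightarrow> 'a \<Rightarrow> 'a set" where
  "red v \<pi> N x = modrel v \<pi> N `` {x}"

text \<open>S_N: the roots in A / \<pi>^N A of the reduction f_N of f (f with coefficients in A):
  a class red x is a root of f_N iff red (f(x)) = red 0.\<close>
definition roots_mod :: "('a::field \<Rightarrow> int) \<Rightarrow> 'a \<Rightarrow> nat \<Rightarrow> 'a poly \<Rightarrow> 'a set set" where
  "roots_mod v \<pi> N f =
     {red v \<pi> N x | x. x \<in> valring v \<and> red v \<pi> N (poly f x) = red v \<pi> N 0}"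

text \<open>The relation \<approx> on S_N: for N \<le> r equality; for N > r congruence modulo
  (image of \<pi>)^(r+1) in A / \<pi>^N A, i.e. the classes have representatives whose
  difference lies in \<pi>^(r+1) A + \<pi>^N A.\<close>
definition approx_rel ::
  "('a::field \<Rightarrow> int) \<Rightarrow> 'a \<Rightarrow> nat \<Rightarrow> nat \<Rightarrow> 'a poly \<Rightarrow> ('a set \<times> 'a set) set" where
  "approx_rel v \<pi> N r f =
     {(X, Y). X \<in> roots_mod v \<pi> N f \<and> Y \<in> roots_mod v \<pi> N f \<and>
        (if N \<le> r then X = Y
         else (\<exists>x\<in>X. \<exists>y\<in>Y. \<exists>a\<in>pideal v \<pi> (r + 1). \<exists>b\<in>pideal v \<pi> N. x - y = a + b))}"

end

theory Submission
  imports Defs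
begin

text \<open>The Sylvester matrix of \<open>f\<close> and \<open>f'\<close> has entries in \<open>A\<close>, so its adjugate
  writes \<open>\<Delta> = a f(x) + b f'(x)\<close> with \<open>a, b \<in> A\<close> for every \<open>x \<in> A\<close>. If \<open>f(x) \<equiv> 0\<close> modulo
  \<open>\<pi>\<^sup>N\<close> with \<open>N > r\<close>, this forces \<open>v(f'(x)) \<le> r\<close>; since \<open>N > 2r\<close>, Newton's iteration from \<open>x\<close>
  converges to a root \<open>\<alpha>\<close> with \<open>v(\<alpha> - x) > r\<close>. Conversely, for distinct roots \<open>\<alpha>, \<beta>\<close> Taylor
  expansion shows that \<open>\<alpha> - \<beta>\<close> divides \<open>f'(\<alpha>)\<close> and hence \<open>\<Delta>\<close>, so \<open>v(\<alpha> - \<beta>) \<le> r\<close>.\<close>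

definition val_ge :: "('a::field \<Rightarrow> int) \<Rightarrow> int \<Rightarrow> 'a \<Rightarrow> bool" where
  "val_ge v k y \<longleftrightarrow> y = 0 \<or> k \<le> v y"

definition integral_poly :: "('a::field \<Rightarrow> int) \<Rightarrow> 'a poly \<Rightarrow> bool" where
  "integral_poly v p \<longleftrightarrow> (\<forall>i. val_ge v 0 (coeff p i))"

lemma valring_eq: "valring v = {y. val_ge v 0 y}"
  unfolding valring_def val_ge_def by auto

section \<open>The resultant as a combination of the two polynomials\<close>

lemma sum_coeff_reversed:
  fixes p :: "'a::comm_semiring_1 poly"
  assumes "degree p < d"
  shows "(\<Sum>j<d. coeff p (d - 1 - j) * x ^ (d - 1 - j)) = poly p x"
proof -
  have "(\<Sum>j<d. coeff p (d - 1 - j) * x ^ (d - 1 - j)) = (\<Sum>j<d. coeff p j * x ^ j)"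
    using sum.nat_diff_reindex[of "\<lambda>i. coeff p i * x ^ i" d] by simp
  also have "\<dots> = (\<Sum>j\<le>degree p. coeff p j * x ^ j)"
    using assms by (intro sum.mono_neutral_right) (auto simp: coeff_eq_0)
  also have "\<dots> = poly p x"
    by (simp only: poly_altdef)
  finally show ?thesis .
qed

lemma sylvester_mat_row_poly:
  fixes p q :: "'a::comm_ring_1 poly"
  defines "n \<equiv> degree q" and "d \<equiv> degree p + degree q"
  assumes k: "k < d"
  shows "(\<Sum>j<d. sylvester_mat p q $$ (k, j) * x ^ (d - 1 - j)) =
    (if k < n then x ^ (n - 1 - k) * poly p x else x ^ (d - 1 - k) * poly q x)"
proof -
  define r where "r = (if k < n then monom 1 (n - 1 - k) * p else monom 1 (d - 1 - k) * q)"
  have entry: "sylvester_mat p q $$ (k, j) = coeff r (d - 1 - j)" if "j < d" for j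
    using sylvester_index_mat2[of k p q j] k that
    by (auto simp: r_def coeff_monom_mult n_def d_def)
  have deg: "degree (monom 1 t * s) \<le> t + degree s" for t and s :: "'a poly"
    using degree_mult_le[of "monom 1 t" s] degree_monom_le[of "1::'a" t] by linarith
  have "degree r < d"
    using k deg[of "n - 1 - k" p] deg[of "d - 1 - k" q]
    by (auto simp: r_def n_def d_def)
  then have "(\<Sum>j<d. sylvester_mat p q $$ (k, j) * x ^ (d - 1 - j)) = poly r x"
    using sum_coeff_reversed[of r d x] by (simp add: entry)
  then show ?thesis by (simp add: r_def poly_monom)
qed

text \<open>The Sylvester matrix maps the vector of powers \<open>(x\<^sup>d\<^sup>-\<^sup>1, \<dots>, x, 1)\<close> to the vector of the
  \<open>x\<^sup>i p(x)\<close> and \<open>x\<^sup>j q(x)\<close>; applying the adjugate and reading off the last entry gives the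
  resultant.\<close>
lemma resultant_eq_adj_combination:
  fixes p q :: "'a::comm_ring_1 poly"
  defines "n \<equiv> degree q" and "d \<equiv> degree p + degree q"
  defines "c \<equiv> \<lambda>k. adj_mat (sylvester_mat p q) $$ (d - 1, k)"
  assumes d_pos: "0 < d"
  shows "resultant p q =
    (\<Sum>k<n. c k * x ^ (n - 1 - k)) * poly p x + (\<Sum>k\<in>{n..<d}. c k * x ^ (d - 1 - k)) * poly q x"
proof -
  define S where "S = sylvester_mat p q"
  define w where "w = vec d (\<lambda>j. x ^ (d - 1 - j))"
  define u where "u k = (if k < n then x ^ (n - 1 - k) * poly p x else x ^ (d - 1 - k) * poly q x)" for k
  have S: "S \<in> carrier_mat d d" unfolding S_def d_def by (rule sylvester_carrier_mat)
  have Sw: "S *\<^sub>v w = vec d u"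
    using S sylvester_mat_row_poly[of _ p q x]
    by (intro eq_vecI) (auto simp: S_def w_def u_def scalar_prod_def n_def d_def lessThan_atLeast0)
  have "resultant p q = ((det S \<cdot>\<^sub>m 1\<^sub>m d) *\<^sub>v w) $ (d - 1)"
    using d_pos by (simp add: resultant_def S_def w_def scalar_prod_def sum.remove[of _ "d - 1"])
  also have "\<dots> = ((adj_mat S * S) *\<^sub>v w) $ (d - 1)"
    using adj_mat(3)[OF S] by simp
  also have "\<dots> = (adj_mat S *\<^sub>v vec d u) $ (d - 1)"
    using adj_mat(1)[OF S] S by (simp add: Sw[symmetric] w_def)
  also have "\<dots> = (\<Sum>k<d. c k * u k)"
    using adj_mat(1)[OF S] d_pos by (simp add: scalar_prod_def c_def S_def lessThan_atLeast0)
  also have "\<dots> = (\<Sum>k<n. c k * u k) + (\<Sum>k\<in>{n..<d}. c k * u k)"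
    by (simp add: d_def n_def sum.atLeastLessThan_concat[symmetric] lessThan_atLeast0)
  also have "\<dots> = (\<Sum>k<n. c k * x ^ (n - 1 - k)) * poly p x + (\<Sum>k\<in>{n..<d}. c k * x ^ (d - 1 - k)) * poly q x"
    by (simp add: u_def sum_distrib_right mult.assoc)
  finally show ?thesis .
qed

section \<open>Integrality with respect to a discrete valuation\<close>

locale discretely_valued =
  fixes v :: "'a::field \<Rightarrow> int"
  assumes discrete_valuation: "discrete_valuation v"
begin

lemma val_mult: "x \<noteq> 0 \<Longrightarrow> y \<noteq> 0 \<Longrightarrow> v (x * y) = v x + v y"
  using discrete_valuation unfolding discrete_valuation_def by blast

lemma val_add_ge_min: "x \<noteq> 0 \<Longrightarrow> y \<noteq> 0 \<Longrightarrow> x + y \<noteq> 0 \<Longrightarrow> min (v x) (v y) \<le> v (x + y)"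
  using discrete_valuation unfolding discrete_valuation_def by blast

lemma val_one [simp]: "v 1 = 0"
  using val_mult[of 1 1] by simp

lemma val_minus [simp]: "v (- x) = v x"
proof (cases "x = 0")
  case False
  have "v (-1) = 0"
    using val_mult[of "-1" "-1"] by simp
  then show ?thesis
    using val_mult[of "-1" x] False by simp
qed simp

lemma val_inverse: "x \<noteq> 0 \<Longrightarrow> v (inverse x) = - v x"
  using val_mult[of x "inverse x"] by simp

lemma val_divide: "x \<noteq> 0 \<Longrightarrow> y \<noteq> 0 \<Longrightarrow> v (x / y) = v x - v y"
  by (simp add: divide_inverse val_mult val_inverse)

lemma val_power: "x \<noteq> 0 \<Longrightarrow> v (x ^ n) = int n * v x"
  by (induction n) (auto simp: val_mult algebra_simps)

lemma val_add_eq_left: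
  assumes "a \<noteq> 0" "val_ge v (v a + 1) b"
  shows "a + b \<noteq> 0 \<and> v (a + b) = v a"
proof (cases "b = 0")
  case False
  then have vb: "v a < v b"
    using assms unfolding val_ge_def by auto
  have ab: "a + b \<noteq> 0"
  proof
    assume "a + b = 0"
    then have "b = - a"
      by (simp add: eq_neg_iff_add_eq_0 add.commute)
    then show False
      using vb by simp
  qed
  have "v a \<le> v (a + b)"
    using val_add_ge_min[OF assms(1) False ab] vb by simp
  moreover have "v (a + b) \<le> v a"
    using val_add_ge_min[OF ab, of "- b"] False assms(1) vb by simp
  ultimately show ?thesis
    using ab by simp
qed (use assms in simp)

lemma val_ge_0 [simp]: "val_ge v k 0"
  by (simp add: val_ge_def)

lemma val_ge_add: "val_ge v k a \<Longrightarrow> val_ge v k b \<Longrightarrow> val_ge v k (a + b)"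
  unfolding val_ge_def using val_add_ge_min[of a b] by fastforce

lemma val_ge_minus_iff [simp]: "val_ge v k (- a) \<longleftrightarrow> val_ge v k a"
  by (simp add: val_ge_def)

lemma val_ge_diff: "val_ge v k a \<Longrightarrow> val_ge v k b \<Longrightarrow> val_ge v k (a - b)"
  using val_ge_add[of k a "- b"] by simp

lemma val_ge_diff_commute: "val_ge v k (a - b) \<longleftrightarrow> val_ge v k (b - a)"
  using val_ge_minus_iff[of k "a - b"] by simp

lemma val_ge_mult: "val_ge v k a \<Longrightarrow> val_ge v m b \<Longrightarrow> val_ge v (k + m) (a * b)"
  unfolding val_ge_def using val_mult[of a b] by (cases "a = 0"; cases "b = 0") auto

lemma val_ge_mult_integral: "val_ge v 0 a \<Longrightarrow> val_ge v k b \<Longrightarrow> val_ge v k (a * b)"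
  using val_ge_mult[of 0 a k b] by simp

lemma val_ge_mono: "m \<le> k \<Longrightarrow> val_ge v k a \<Longrightarrow> val_ge v m a"
  unfolding val_ge_def by auto

lemma val_ge_one: "val_ge v 0 1"
  by (simp add: val_ge_def)

lemma val_ge_power: "val_ge v 0 a \<Longrightarrow> val_ge v 0 (a ^ n)"
  by (induction n) (auto simp: val_ge_one val_ge_mult_integral)

lemma val_ge_of_int: "val_ge v 0 (of_int n)"
proof -
  have "val_ge v 0 (of_nat m)" for m
    by (induction m) (auto simp: val_ge_one val_ge_add)
  then show ?thesis
    by (cases n rule: int_cases) (simp_all only: of_int_of_nat_eq of_int_minus val_ge_minus_iff)
qed

lemma val_ge_sum: "(\<And>i. i \<in> I \<Longrightarrow> val_ge v k (f i)) \<Longrightarrow> val_ge v k (sum f I)"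
  by (induction I rule: infinite_finite_induct) (auto intro: val_ge_add)

lemma val_ge_prod: "(\<And>i. i \<in> I \<Longrightarrow> val_ge v 0 (f i)) \<Longrightarrow> val_ge v 0 (prod f I)"
  by (induction I rule: infinite_finite_induct) (auto simp: val_ge_one intro: val_ge_mult_integral)

lemma not_val_ge_succ: "y \<noteq> 0 \<Longrightarrow> \<not> val_ge v (v y + 1) y"
  unfolding val_ge_def by auto

lemma zero_if_val_ge_all:
  assumes "\<And>n. 0 \<le> n \<Longrightarrow> val_ge v n y"
  shows "y = 0"
  using assms[of "max 0 (v y + 1)"] val_ge_mono[of "v y + 1" "max 0 (v y + 1)" y]
    not_val_ge_succ[of y] by auto

lemma val_ge_poly: "integral_poly v p \<Longrightarrow> val_ge v 0 x \<Longrightarrow> val_ge v 0 (poly p x)"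
  unfolding integral_poly_def poly_altdef
  by (intro val_ge_sum val_ge_mult_integral val_ge_power) auto

lemma integral_poly_pderiv: "integral_poly v p \<Longrightarrow> integral_poly v (pderiv p)"
  unfolding integral_poly_def coeff_pderiv
  by (metis of_int_of_nat_eq val_ge_mult_integral val_ge_of_int)

lemma poly_expansion_second_order:
  assumes "integral_poly v p" "val_ge v 0 x" "val_ge v 0 h"
  shows "\<exists>g. val_ge v 0 g \<and> poly p (x + h) = poly p x + h * poly (pderiv p) x + h\<^sup>2 * g"
  using assms(1)
proof (induction p rule: pCons_induct)
  case (pCons a p)
  have p: "integral_poly v p"
    using pCons.prems unfolding integral_poly_def by (metis coeff_pCons_Suc)
  obtain g where g: "val_ge v 0 g" "poly p (x + h) = poly p x + h * poly (pderiv p) x + h\<^sup>2 * g"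
    using pCons.IH[OF p] by blast
  have "val_ge v 0 (poly (pderiv p) x)"
    using val_ge_poly[OF integral_poly_pderiv[OF p] assms(2)] .
  then have "val_ge v 0 (x * g + poly (pderiv p) x + h * g)"
    using g(1) assms(2,3) by (intro val_ge_add val_ge_mult_integral)
  moreover have "poly (pCons a p) (x + h) = poly (pCons a p) x + h * poly (pderiv (pCons a p)) x
      + h\<^sup>2 * (x * g + poly (pderiv p) x + h * g)"
    unfolding poly_pCons pderiv_pCons poly_add g(2) by (simp add: power2_eq_square algebra_simps)
  ultimately show ?case by blast
qed (intro exI[of _ 0], simp)

lemma poly_expansion_first_order:
  assumes "integral_poly v p" "val_ge v 0 x" "val_ge v 0 h"
  shows "\<exists>g. val_ge v 0 g \<and> poly p (x + h) = poly p x + h * g"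
proof -
  obtain g where g: "val_ge v 0 g" "poly p (x + h) = poly p x + h * poly (pderiv p) x + h\<^sup>2 * g"
    using poly_expansion_second_order[OF assms] by blast
  have "val_ge v 0 (poly (pderiv p) x + h * g)"
    using g(1) assms val_ge_poly[OF integral_poly_pderiv] by (intro val_ge_add val_ge_mult_integral)
  with g(2) show ?thesis
    by (intro exI[of _ "poly (pderiv p) x + h * g"]) (simp add: power2_eq_square algebra_simps)
qed

lemma roots_integral:
  assumes f: "integral_poly v f" and monic: "lead_coeff f = 1" and root: "poly f x = 0"
  shows "val_ge v 0 x"
proof (rule ccontr)
  assume "\<not> val_ge v 0 x"
  then have x: "x \<noteq> 0" "v x < 0"
    unfolding val_ge_def by auto
  define n where "n = degree f"
  define y where "y = inverse x"
  have y: "val_ge v 1 y"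
    using val_inverse[OF x(1)] x(2) by (simp add: val_ge_def y_def)
  have "0 = (\<Sum>i\<le>n. coeff f i * x ^ i) * y ^ n"
    using root by (simp add: poly_altdef n_def)
  also have "\<dots> = (\<Sum>i\<le>n. coeff f i * y ^ (n - i))"
    unfolding sum_distrib_right
  proof (intro sum.cong refl)
    fix i assume "i \<in> {..n}"
    then have "y ^ n = y ^ i * y ^ (n - i)"
      by (simp add: power_add[symmetric])
    then show "coeff f i * x ^ i * y ^ n = coeff f i * y ^ (n - i)"
      using x(1) by (simp add: y_def power_mult_distrib[symmetric] field_simps)
  qed
  also have "\<dots> = 1 + (\<Sum>i<n. coeff f i * y ^ (n - i))"
    using monic by (simp add: lessThan_Suc_atMost[symmetric] n_def)
  finally have one: "1 = - (\<Sum>i<n. coeff f i * y ^ (n - i))"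
    by (simp add: eq_neg_iff_add_eq_0)
  have "val_ge v 1 (\<Sum>i<n. coeff f i * y ^ (n - i))"
  proof (intro val_ge_sum)
    fix i assume "i \<in> {..<n}"
    then have "y ^ (n - i) = y * y ^ (n - i - 1)"
      by (simp add: power_Suc[symmetric] Suc_diff_Suc)
    moreover have "val_ge v (1 + 0) (y * y ^ (n - i - 1))"
      using y val_ge_mono[OF _ y] by (intro val_ge_mult val_ge_power) auto
    ultimately show "val_ge v 1 (coeff f i * y ^ (n - i))"
      using f unfolding integral_poly_def by (intro val_ge_mult_integral) auto
  qed
  then have "val_ge v 1 (1::'a)"
    using one val_ge_minus_iff by metis
  then show False
    by (simp add: val_ge_def)
qed

lemma val_ge_det:
  assumes "\<And>i j. i < dim_row A \<Longrightarrow> j < dim_col A \<Longrightarrow> val_ge v 0 (A $$ (i, j))"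
  shows "val_ge v 0 (det A)"
proof (cases "dim_row A = dim_col A")
  case True
  have "val_ge v 0 (signof p * (\<Prod>i = 0..<dim_row A. A $$ (i, p i)))"
    if "p permutes {0..<dim_row A}" for p
    using assms True permutes_in_image[OF that]
    by (intro val_ge_mult_integral val_ge_of_int val_ge_prod) auto
  then show ?thesis
    using True unfolding det_def by (auto intro: val_ge_sum)
qed (simp add: det_def)

lemma val_ge_adj_mat:
  assumes A: "A \<in> carrier_mat n n"
    and integral: "\<And>i j. i < n \<Longrightarrow> j < n \<Longrightarrow> val_ge v 0 (A $$ (i, j))"
    and ij: "i < n" "j < n"
  shows "val_ge v 0 (adj_mat A $$ (i, j))"
proof -
  have "val_ge v 0 (det (mat_delete A j i))"
  proof (rule val_ge_det)
    fix k l assume "k < dim_row (mat_delete A j i)" "l < dim_col (mat_delete A j i)"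
    with A integral show "val_ge v 0 (mat_delete A j i $$ (k, l))"
      by (auto simp: mat_delete_def)
  qed
  then have "val_ge v 0 (cofactor A j i)"
    unfolding cofactor_def by (intro val_ge_mult_integral val_ge_power) (simp add: val_ge_def)
  then show ?thesis
    using A ij by (simp add: adj_mat_def)
qed

lemma val_ge_sylvester_mat:
  assumes "integral_poly v p" "integral_poly v q"
    and "i < degree p + degree q" "j < degree p + degree q"
  shows "val_ge v 0 (sylvester_mat p q $$ (i, j))"
  using assms unfolding integral_poly_def by (subst sylvester_index_mat) auto

lemma val_ge_resultant:
  assumes "integral_poly v p" "integral_poly v q"
  shows "val_ge v 0 (resultant p q)"
  unfolding resultant_def using val_ge_sylvester_mat[OF assms] by (intro val_ge_det) simp

lemma resultant_integral_combination:
  assumes p: "integral_poly v p" and q: "integral_poly v q"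
    and deg: "0 < degree p + degree q" and x: "val_ge v 0 x"
  shows "\<exists>a b. val_ge v 0 a \<and> val_ge v 0 b \<and> resultant p q = a * poly p x + b * poly q x"
proof -
  define d where "d = degree p + degree q"
  define c where "c k = adj_mat (sylvester_mat p q) $$ (d - 1, k)" for k
  define a where "a = (\<Sum>k<degree q. c k * x ^ (degree q - 1 - k))"
  define b where "b = (\<Sum>k\<in>{degree q..<d}. c k * x ^ (d - 1 - k))"
  have "val_ge v 0 (c k * x ^ m)" if "k < d" for k m
    using val_ge_adj_mat[OF sylvester_carrier_mat val_ge_sylvester_mat[OF p q]] deg that x
    by (auto simp: c_def d_def intro: val_ge_mult_integral val_ge_power)
  then have "val_ge v 0 a" "val_ge v 0 b"
    unfolding a_def b_def d_def by (auto intro!: val_ge_sum)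
  moreover have "resultant p q = a * poly p x + b * poly q x"
    using resultant_eq_adj_combination[OF deg] by (simp add: a_def b_def c_def d_def)
  ultimately show ?thesis by blast
qed

section \<open>Hensel's lemma\<close>

lemma newton_step:
  assumes f: "integral_poly v f" and y: "val_ge v 0 y"
    and f'y: "poly (pderiv f) y \<noteq> 0" "v (poly (pderiv f) y) = e"
    and fy: "val_ge v m (poly f y)" and m: "2 * e + 1 \<le> m"
  defines "y' \<equiv> y - poly f y / poly (pderiv f) y"
  shows "val_ge v 0 y' \<and> poly (pderiv f) y' \<noteq> 0 \<and> v (poly (pderiv f) y') = e \<and>
    val_ge v (m + 1) (poly f y') \<and> val_ge v (m - e) (y' - y)"
proof (cases "poly f y = 0")
  case False
  define d where "d = poly (pderiv f) y"
  define h where "h = - (poly f y / d)"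
  have y': "y' = y + h"
    by (simp add: y'_def h_def d_def)
  have e: "0 \<le> e"
    using val_ge_poly[OF integral_poly_pderiv[OF f] y] f'y unfolding val_ge_def by auto
  have k: "m \<le> v (poly f y)"
    using fy False unfolding val_ge_def by auto
  have h_val: "val_ge v (v (poly f y) - e) h"
    using val_divide[OF False f'y(1)] f'y(2) by (simp add: val_ge_def h_def d_def)
  then have h: "val_ge v 0 h"
    by (rule val_ge_mono[rotated]) (use k m e in linarith)
  obtain g where g: "val_ge v 0 g" "poly f (y + h) = poly f y + h * d + h\<^sup>2 * g"
    using poly_expansion_second_order[OF f y h] unfolding d_def by blast
  have "poly f y + h * d = 0"
    using f'y(1) by (simp add: h_def d_def)
  then have "poly f y' = h * h * g"
    using g(2) y' by (simp add: power2_eq_square)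
  then have "val_ge v ((v (poly f y) - e) + (v (poly f y) - e) + 0) (poly f y')"
    using val_ge_mult[OF val_ge_mult[OF h_val h_val] g(1)] by simp
  then have fy': "val_ge v (m + 1) (poly f y')"
    by (rule val_ge_mono[rotated]) (use k m e in linarith)
  obtain g' where g': "val_ge v 0 g'" "poly (pderiv f) (y + h) = d + h * g'"
    using poly_expansion_first_order[OF integral_poly_pderiv[OF f] y h] unfolding d_def by blast
  have "val_ge v ((v (poly f y) - e) + 0) (h * g')"
    using h_val g'(1) by (intro val_ge_mult)
  then have "val_ge v (v d + 1) (h * g')"
    by (rule val_ge_mono[rotated]) (use k m f'y(2) in \<open>simp add: d_def\<close>)
  then have "poly (pderiv f) y' \<noteq> 0 \<and> v (poly (pderiv f) y') = e"
    using val_add_eq_left[of d "h * g'"] f'y g'(2) y' by (simp add: d_def)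
  moreover have "val_ge v (m - e) (y' - y)"
    using y' val_ge_mono[OF _ h_val, of "m - e"] k by simp
  ultimately show ?thesis
    using y' y h fy' by (simp add: val_ge_add)
qed (use y f'y in \<open>simp add: y'_def\<close>)

lemma val_complete_limit:
  assumes complete: "val_complete v"
    and step: "\<And>n. val_ge v (c + int n) (s (Suc n) - s n)"
  shows "\<exists>L. \<forall>n. val_ge v (c + int n) (L - s n)"
proof -
  have tail: "val_ge v (c + int i) (s j - s i)" if "i \<le> j" for i j
    using that
  proof (induction j rule: dec_induct)
    case (step j)
    have "val_ge v (c + int i) (s (Suc j) - s j)"
      using step.hyps val_ge_mono[OF _ assms(2)[of j]] by simp
    then show ?case
      using val_ge_add[OF _ step.IH] by fastforce
  qed simp
  have cauchy: "val_ge v (c + int (min i j)) (s i - s j)" for i j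
    using tail[of i j] tail[of j i] val_ge_diff_commute by (cases "i \<le> j") (auto simp: min_def)
  have "\<forall>k::int. \<exists>M. \<forall>i\<ge>M. \<forall>j\<ge>M. s i = s j \<or> k \<le> v (s i - s j)"
  proof
    fix k :: int
    have "val_ge v k (s i - s j)" if "nat (k - c) \<le> i" "nat (k - c) \<le> j" for i j
      using that by (intro val_ge_mono[OF _ cauchy]) linarith
    then show "\<exists>M. \<forall>i\<ge>M. \<forall>j\<ge>M. s i = s j \<or> k \<le> v (s i - s j)"
      unfolding val_ge_def by auto
  qed
  then obtain L where L: "\<forall>k::int. \<exists>M. \<forall>i\<ge>M. s i = L \<or> k \<le> v (s i - L)"
    using complete unfolding val_complete_def by blast
  have "val_ge v (c + int n) (L - s n)" for n
  proof -
    obtain M where M: "\<forall>i\<ge>M. val_ge v (c + int n) (s i - L)"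
      using L unfolding val_ge_def by fastforce
    define i where "i = max M n"
    have "L - s n = (s i - s n) - (s i - L)"
      by simp
    then show ?thesis
      using val_ge_diff[OF tail[of n i] M[rule_format, of i]] by (simp add: i_def)
  qed
  then show ?thesis by blast
qed

text \<open>Hensel's lemma in Newton's form: the iteration \<open>y \<mapsto> y - f(y)/f'(y)\<close>
  keeps \<open>v(f'(y)) = e\<close> fixed and raises \<open>v(f(y))\<close> by at least one per step.\<close>
lemma hensel:
  assumes complete: "val_complete v" and f: "integral_poly v f" and x: "val_ge v 0 x"
    and f'x: "poly (pderiv f) x \<noteq> 0" "v (poly (pderiv f) x) = e"
    and fx: "val_ge v c (poly f x)" and c: "2 * e + 1 \<le> c"
  shows "\<exists>\<alpha>. poly f \<alpha> = 0 \<and> val_ge v 0 \<alpha> \<and> val_ge v (c - e) (\<alpha> - x)"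
proof -
  define s where "s n = ((\<lambda>y. y - poly f y / poly (pderiv f) y) ^^ n) x" for n
  have s_Suc: "s (Suc n) = s n - poly f (s n) / poly (pderiv f) (s n)" for n
    by (simp add: s_def)
  have e: "0 \<le> e"
    using val_ge_poly[OF integral_poly_pderiv[OF f] x] f'x unfolding val_ge_def by auto
  have inv: "val_ge v 0 (s n) \<and> poly (pderiv f) (s n) \<noteq> 0 \<and> v (poly (pderiv f) (s n)) = e \<and>
      val_ge v (c + int n) (poly f (s n))" for n
  proof (induction n)
    case (Suc n)
    then show ?case
      using newton_step[OF f, of "s n" e "c + int n"] c unfolding s_Suc by (simp add: ac_simps)
  qed (use x f'x fx in \<open>simp add: s_def\<close>)
  have "val_ge v (c - e + int n) (s (Suc n) - s n)" for n
    using newton_step[OF f, of "s n" e "c + int n"] inv[of n] c unfolding s_Suc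
    by (simp add: algebra_simps)
  then obtain \<alpha> where \<alpha>: "\<And>n. val_ge v (c - e + int n) (\<alpha> - s n)"
    using val_complete_limit[OF complete] by blast
  have "poly f \<alpha> = 0"
  proof (rule zero_if_val_ge_all)
    fix k :: int assume "0 \<le> k"
    define n where "n = nat k"
    have "val_ge v 0 (\<alpha> - s n)"
      by (rule val_ge_mono[OF _ \<alpha>[of n]]) (use c e in linarith)
    then obtain g where g: "val_ge v 0 g" "poly f (s n + (\<alpha> - s n)) = poly f (s n) + (\<alpha> - s n) * g"
      using poly_expansion_first_order[OF f] inv[of n] by blast
    have "val_ge v k (poly f (s n))"
      by (rule val_ge_mono[OF _ inv[THEN conjunct2, THEN conjunct2, THEN conjunct2]])
        (use c e \<open>0 \<le> k\<close> in \<open>simp add: n_def\<close>)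
    moreover have "val_ge v k ((\<alpha> - s n) * g)"
      by (rule val_ge_mono[OF _ val_ge_mult[OF \<alpha> g(1)]]) (use c e \<open>0 \<le> k\<close> in \<open>simp add: n_def\<close>)
    ultimately show "val_ge v k (poly f \<alpha>)"
      using g(2) val_ge_add by fastforce
  qed
  moreover have "val_ge v (c - e) (\<alpha> - x)"
    using \<alpha>[of 0] by (simp add: s_def)
  moreover have "val_ge v 0 \<alpha>"
    using val_ge_add[OF val_ge_mono[OF _ \<alpha>[of 0]] inv[THEN conjunct1, of 0]] c e by simp
  ultimately show ?thesis by blast
qed

end

section \<open>Roots of a monic polynomial with nonzero discriminant\<close>

locale monic_separable = discretely_valued +
  fixes f :: "'a::field poly"
  assumes integral: "integral_poly v f"
    and monic: "lead_coeff f = 1"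
    and discr_nonzero: "resultant f (pderiv f) \<noteq> 0"
begin

abbreviation discr :: 'a where
  "discr \<equiv> resultant f (pderiv f)"

lemma discr_combination:
  assumes "val_ge v 0 x"
  shows "\<exists>a b. val_ge v 0 a \<and> val_ge v 0 b \<and> discr = a * poly f x + b * poly (pderiv f) x"
proof (cases "degree f = 0")
  case True
  then have "f = 1"
    using monic by (metis degree_0_id one_pCons)
  then show ?thesis
    by (intro exI[of _ 1] exI[of _ 0]) (simp add: val_ge_one)
next
  case False
  then show ?thesis
    using resultant_integral_combination[OF integral integral_poly_pderiv[OF integral] _ assms]
    by simp
qed

lemma val_discr_nonneg: "0 \<le> v discr"
  using val_ge_resultant[OF integral integral_poly_pderiv[OF integral]] discr_nonzero
  by (simp add: val_ge_def)

text \<open>If \<open>\<beta> = \<alpha> + h\<close> are roots then \<open>f'(\<alpha>)\<close> is divisible by \<open>h\<close>, hence so is the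
  discriminant, a combination of \<open>f(\<alpha>)\<close> and \<open>f'(\<alpha>)\<close>.\<close>
lemma roots_separated:
  assumes roots: "poly f \<alpha> = 0" "poly f \<beta> = 0"
    and close: "val_ge v (v discr + 1) (\<alpha> - \<beta>)"
  shows "\<alpha> = \<beta>"
proof (rule ccontr)
  assume "\<alpha> \<noteq> \<beta>"
  define h where "h = \<beta> - \<alpha>"
  have \<alpha>: "val_ge v 0 \<alpha>" and "val_ge v 0 h"
    using roots_integral[OF integral monic] roots by (auto simp: h_def val_ge_diff)
  then obtain g where g: "val_ge v 0 g" "poly f \<beta> = poly f \<alpha> + h * poly (pderiv f) \<alpha> + h\<^sup>2 * g"
    using poly_expansion_second_order[OF integral] by (fastforce simp: h_def)
  then have "h * (poly (pderiv f) \<alpha> + h * g) = 0"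
    using roots by (simp add: power2_eq_square algebra_simps)
  then have "poly (pderiv f) \<alpha> = - (h * g)"
    using \<open>\<alpha> \<noteq> \<beta>\<close> by (simp add: h_def eq_neg_iff_add_eq_0)
  then have f'\<alpha>: "poly (pderiv f) \<alpha> = (\<alpha> - \<beta>) * g"
    by (simp add: h_def algebra_simps)
  obtain a b where ab: "val_ge v 0 b" "discr = a * poly f \<alpha> + b * poly (pderiv f) \<alpha>"
    using discr_combination[OF \<alpha>] by blast
  have "discr = (\<alpha> - \<beta>) * (b * g)"
    using ab(2) f'\<alpha> roots by (simp add: algebra_simps)
  then have "val_ge v (v discr + 1) discr"
    using val_ge_mult[OF close val_ge_mult_integral[OF ab(1) g(1)]] by simp
  then show False
    using not_val_ge_succ[OF discr_nonzero] by simp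
qed

lemma val_pderiv_le_discr:
  assumes x: "val_ge v 0 x" and fx: "val_ge v k (poly f x)" and k: "v discr < k"
  shows "poly (pderiv f) x \<noteq> 0 \<and> v (poly (pderiv f) x) \<le> v discr"
proof (rule ccontr)
  assume "\<not> ?thesis"
  then have f'x: "val_ge v (v discr + 1) (poly (pderiv f) x)"
    unfolding val_ge_def by auto
  obtain a b where ab: "val_ge v 0 a" "val_ge v 0 b" "discr = a * poly f x + b * poly (pderiv f) x"
    using discr_combination[OF x] by blast
  have "val_ge v (v discr + 1) (a * poly f x)"
    by (rule val_ge_mono[OF _ val_ge_mult_integral[OF ab(1) fx]]) (use k in linarith)
  then have "val_ge v (v discr + 1) (a * poly f x + b * poly (pderiv f) x)"
    using val_ge_mult_integral[OF ab(2) f'x] by (rule val_ge_add)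
  then have "val_ge v (v discr + 1) discr"
    by (simp only: ab(3))
  then show False
    using not_val_ge_succ[OF discr_nonzero] by simp
qed

lemma approximate_root_lifts:
  assumes complete: "val_complete v"
    and x: "val_ge v 0 x" and fx: "val_ge v k (poly f x)" and k: "2 * v discr < k"
  shows "\<exists>\<alpha>. poly f \<alpha> = 0 \<and> val_ge v (v discr + 1) (\<alpha> - x)"
proof -
  define e where "e = v (poly (pderiv f) x)"
  have f'x: "poly (pderiv f) x \<noteq> 0" and e: "e \<le> v discr"
    using val_pderiv_le_discr[OF x fx] k val_discr_nonneg by (auto simp: e_def)
  obtain \<alpha> where "poly f \<alpha> = 0" "val_ge v (k - e) (\<alpha> - x)"
    using hensel[OF complete integral x f'x e_def[symmetric] fx] k e by auto
  moreover have "v discr + 1 \<le> k - e"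
    using k e by linarith
  ultimately show ?thesis
    using val_ge_mono by blast
qed

end

section \<open>Roots modulo \<open>\<pi>\<^sup>N\<close>\<close>

definition approx_root :: "('a::field \<Rightarrow> int) \<Rightarrow> nat \<Rightarrow> 'a poly \<Rightarrow> 'a \<Rightarrow> bool" where
  "approx_root v N f x \<longleftrightarrow> val_ge v 0 x \<and> val_ge v (int N) (poly f x)"

locale uniformized = discretely_valued +
  fixes \<pi> :: "'a::field"
  assumes uniformizer_nonzero: "\<pi> \<noteq> 0" and val_uniformizer: "v \<pi> = 1"
begin

lemma mem_pideal_iff: "y \<in> pideal v \<pi> k \<longleftrightarrow> val_ge v (int k) y"
proof
  assume "y \<in> pideal v \<pi> k"
  then obtain c where "val_ge v 0 c" "y = \<pi> ^ k * c"
    unfolding pideal_def valring_eq by blast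
  moreover have "val_ge v (int k) (\<pi> ^ k)"
    using val_power[OF uniformizer_nonzero] val_uniformizer by (simp add: val_ge_def)
  ultimately show "val_ge v (int k) y"
    using val_ge_mult[of "int k" "\<pi> ^ k" 0 c] by simp
next
  assume y: "val_ge v (int k) y"
  have \<pi>k: "\<pi> ^ k \<noteq> 0" "v (\<pi> ^ k) = int k"
    using val_power[OF uniformizer_nonzero] val_uniformizer uniformizer_nonzero by simp_all
  have "val_ge v 0 (y / \<pi> ^ k)"
    using y val_divide[OF _ \<pi>k(1), of y] \<pi>k(2) by (auto simp: val_ge_def)
  moreover have "y = \<pi> ^ k * (y / \<pi> ^ k)"
    using \<pi>k(1) by simp
  ultimately show "y \<in> pideal v \<pi> k"
    unfolding pideal_def valring_eq by blast
qed

lemma mem_red_iff: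
  "y \<in> red v \<pi> N x \<longleftrightarrow> val_ge v 0 x \<and> val_ge v 0 y \<and> val_ge v (int N) (x - y)"
  by (simp add: red_def modrel_def valring_eq mem_pideal_iff)

lemma red_eq_iff:
  assumes "val_ge v 0 x" "val_ge v 0 y"
  shows "red v \<pi> N x = red v \<pi> N y \<longleftrightarrow> val_ge v (int N) (x - y)"
proof
  assume "red v \<pi> N x = red v \<pi> N y"
  then show "val_ge v (int N) (x - y)"
    using mem_red_iff[of y N y] mem_red_iff[of y N x] assms by simp
next
  assume xy: "val_ge v (int N) (x - y)"
  have "val_ge v (int N) (x - z) \<longleftrightarrow> val_ge v (int N) (y - z)" for z
    using val_ge_add[OF xy, of "y - z"] val_ge_diff[OF _ xy, of "x - z"] by auto
  then show "red v \<pi> N x = red v \<pi> N y"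
    using assms by (auto simp: mem_red_iff)
qed

lemma mem_roots_mod_iff:
  assumes "integral_poly v f"
  shows "X \<in> roots_mod v \<pi> N f \<longleftrightarrow> (\<exists>x. X = red v \<pi> N x \<and> approx_root v N f x)"
  using red_eq_iff[OF val_ge_poly[OF assms] val_ge_0]
  unfolding roots_mod_def valring_eq approx_root_def by auto

lemma pideal_sum_iff:
  assumes "k \<le> N"
  shows "(\<exists>a\<in>pideal v \<pi> k. \<exists>b\<in>pideal v \<pi> N. z = a + b) \<longleftrightarrow> val_ge v (int k) z"
proof
  assume "\<exists>a\<in>pideal v \<pi> k. \<exists>b\<in>pideal v \<pi> N. z = a + b"
  then obtain a b where "val_ge v (int k) a" "val_ge v (int N) b" "z = a + b"
    by (auto simp: mem_pideal_iff)
  then show "val_ge v (int k) z"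
    using val_ge_add val_ge_mono[of "int k" "int N" b] assms by simp
next
  assume "val_ge v (int k) z"
  then show "\<exists>a\<in>pideal v \<pi> k. \<exists>b\<in>pideal v \<pi> N. z = a + b"
    by (intro bexI[of _ z] bexI[of _ 0]) (simp_all add: mem_pideal_iff)
qed

lemma red_approx_rel_iff:
  assumes f: "integral_poly v f" and r: "r < N"
    and x: "approx_root v N f x" and y: "approx_root v N f y"
  shows "(red v \<pi> N x, red v \<pi> N y) \<in> approx_rel v \<pi> N r f \<longleftrightarrow> val_ge v (int r + 1) (x - y)"
proof -
  have representatives: "val_ge v (int r + 1) (x' - y') \<longleftrightarrow> val_ge v (int r + 1) (x - y)"
    if "x' \<in> red v \<pi> N x" "y' \<in> red v \<pi> N y" for x' y'
  proof -
    have "val_ge v (int r + 1) (x - x')" "val_ge v (int r + 1) (y - y')"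
      using that r val_ge_mono[of "int r + 1" "int N"] by (auto simp: mem_red_iff)
    moreover have "x - y = (x - x') + (x' - y') - (y - y')" "x' - y' = (x - y) - (x - x') + (y - y')"
      by simp_all
    ultimately show ?thesis
      by (metis val_ge_add val_ge_diff)
  qed
  have "red v \<pi> N x \<in> roots_mod v \<pi> N f" "red v \<pi> N y \<in> roots_mod v \<pi> N f"
    using x y by (auto simp: mem_roots_mod_iff[OF f])
  then have "(red v \<pi> N x, red v \<pi> N y) \<in> approx_rel v \<pi> N r f \<longleftrightarrow>
      (\<exists>x'\<in>red v \<pi> N x. \<exists>y'\<in>red v \<pi> N y. val_ge v (int r + 1) (x' - y'))"
    using r pideal_sum_iff[of "r + 1" N] by (simp add: approx_rel_def add.commute)
  moreover have "x \<in> red v \<pi> N x" "y \<in> red v \<pi> N y"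
    using x y by (simp_all add: mem_red_iff approx_root_def)
  ultimately show ?thesis
    using representatives by blast
qed

lemma equiv_approx_rel:
  assumes f: "integral_poly v f" and r: "r < N"
  shows "equiv (roots_mod v \<pi> N f) (approx_rel v \<pi> N r f)"
proof -
  let ?S = "roots_mod v \<pi> N f" and ?R = "approx_rel v \<pi> N r f"
  have R_iff: "(red v \<pi> N x, red v \<pi> N y) \<in> ?R \<longleftrightarrow> val_ge v (int r + 1) (x - y)"
    if "approx_root v N f x" "approx_root v N f y" for x y
    using red_approx_rel_iff[OF f r that] .
  have S: "\<exists>x. X = red v \<pi> N x \<and> approx_root v N f x" if "X \<in> ?S" for X
    using that by (simp add: mem_roots_mod_iff[OF f])
  have R_S: "?R \<subseteq> ?S \<times> ?S"
    unfolding approx_rel_def by auto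
  have S2: "\<exists>x y. X = red v \<pi> N x \<and> Y = red v \<pi> N y \<and> approx_root v N f x \<and> approx_root v N f y"
    if "(X, Y) \<in> ?R" for X Y
  proof -
    have "X \<in> ?S" "Y \<in> ?S"
      using R_S that by auto
    then show ?thesis
      using S by meson
  qed
  show ?thesis
  proof (rule equivI[OF R_S])
    show "refl_on ?S ?R"
    proof (rule refl_onI)
      fix X assume "X \<in> ?S"
      then obtain x where "X = red v \<pi> N x" "approx_root v N f x"
        using S by blast
      then show "(X, X) \<in> ?R"
        using R_iff[of x x] by simp
    qed
    show "sym ?R"
    proof (rule symI)
      fix X Y assume XY: "(X, Y) \<in> ?R"
      then obtain x y where xy: "X = red v \<pi> N x" "Y = red v \<pi> N y"
        and roots: "approx_root v N f x" "approx_root v N f y"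
        using S2 by blast
      then have "val_ge v (int r + 1) (y - x)"
        using XY R_iff val_ge_diff_commute by simp
      then show "(Y, X) \<in> ?R"
        using xy R_iff[OF roots(2,1)] by simp
    qed
    show "trans ?R"
    proof (rule transI)
      fix X Y Z assume XY: "(X, Y) \<in> ?R" and YZ: "(Y, Z) \<in> ?R"
      obtain x y where xy: "X = red v \<pi> N x" "Y = red v \<pi> N y"
        and x: "approx_root v N f x" and y: "approx_root v N f y"
        using S2[OF XY] by blast
      obtain z where z: "Z = red v \<pi> N z" "approx_root v N f z"
        using S2[OF YZ] by blast
      have "val_ge v (int r + 1) (x - y)" "val_ge v (int r + 1) (y - z)"
        using XY YZ xy z R_iff[OF x y] R_iff[OF y z(2)] by simp_all
      then have "val_ge v (int r + 1) ((x - y) + (y - z))"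
        by (rule val_ge_add)
      then show "(X, Z) \<in> ?R"
        using xy z R_iff[OF x z(2)] by simp
    qed
  qed
qed

end

locale hensel_setting = uniformized v \<pi> + monic_separable v f
  for v :: "'a::field \<Rightarrow> int" and \<pi> :: 'a and f :: "'a poly" +
  assumes complete: "val_complete v"
begin

lemma bij_betw_roots_approx_classes:
  assumes N: "2 * v discr < int N"
  defines "r \<equiv> nat (v discr)"
  shows "bij_betw (\<lambda>x. approx_rel v \<pi> N r f `` {red v \<pi> N x}) {x. poly f x = 0}
    (roots_mod v \<pi> N f // approx_rel v \<pi> N r f)"
proof -
  let ?S = "roots_mod v \<pi> N f" and ?R = "approx_rel v \<pi> N r f"
  have r: "int r = v discr" "r < N"
    using val_discr_nonneg N by (simp_all add: r_def)
  have equiv: "equiv ?S ?R"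
    using equiv_approx_rel[OF integral r(2)] .
  have root: "approx_root v N f \<alpha>" if "poly f \<alpha> = 0" for \<alpha>
    using roots_integral[OF integral monic that] that by (simp add: approx_root_def)
  then have root_class: "red v \<pi> N \<alpha> \<in> ?S" if "poly f \<alpha> = 0" for \<alpha>
    using that by (auto simp: mem_roots_mod_iff[OF integral])
  have R_iff: "(red v \<pi> N x, red v \<pi> N y) \<in> ?R \<longleftrightarrow> val_ge v (v discr + 1) (x - y)"
    if "approx_root v N f x" "approx_root v N f y" for x y
    using red_approx_rel_iff[OF integral r(2) that] r(1) by simp
  show ?thesis
    unfolding bij_betw_def
  proof
    show "inj_on (\<lambda>x. ?R `` {red v \<pi> N x}) {x. poly f x = 0}"
    proof (rule inj_onI)
      fix \<alpha> \<beta> assume \<alpha>: "\<alpha> \<in> {x. poly f x = 0}" and \<beta>: "\<beta> \<in> {x. poly f x = 0}"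
        and "?R `` {red v \<pi> N \<alpha>} = ?R `` {red v \<pi> N \<beta>}"
      then have "val_ge v (v discr + 1) (\<alpha> - \<beta>)"
        using eq_equiv_class_iff[OF equiv] root_class R_iff root by simp
      then show "\<alpha> = \<beta>"
        using roots_separated \<alpha> \<beta> by simp
    qed
    have "?S // ?R \<subseteq> (\<lambda>x. ?R `` {red v \<pi> N x}) ` {x. poly f x = 0}"
    proof
      fix Y assume "Y \<in> ?S // ?R"
      then obtain x where Y: "Y = ?R `` {red v \<pi> N x}" and x: "approx_root v N f x"
        by (auto elim!: quotientE simp: mem_roots_mod_iff[OF integral])
      then obtain \<alpha> where \<alpha>: "poly f \<alpha> = 0" "val_ge v (v discr + 1) (\<alpha> - x)"
        using approximate_root_lifts[OF complete] N by (auto simp: approx_root_def)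
      then have "?R `` {red v \<pi> N \<alpha>} = Y"
        using equiv_class_eq[OF equiv] R_iff[OF root x] Y by simp
      then show "Y \<in> (\<lambda>x. ?R `` {red v \<pi> N x}) ` {x. poly f x = 0}"
        using \<alpha>(1) by blast
    qed
    then show "(\<lambda>x. ?R `` {red v \<pi> N x}) ` {x. poly f x = 0} = ?S // ?R"
      using root_class by (auto intro: quotientI)
  qed
qed

end

theorem theorem3p9:
  fixes v :: "'a::field \<Rightarrow> int" and \<pi> :: 'a and f :: "'a poly" and N :: nat
  assumes val: "discrete_valuation v"
    and unif: "\<pi> \<noteq> 0" "v \<pi> = 1"
    and compl: "val_complete v"
    and resfin: "finite (quot_ring v \<pi> 1)"
    and coeffA: "\<forall>i. coeff f i \<in> valring v"
    and monic: "lead_coeff f = 1"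
    and disc: "resultant f (pderiv f) \<noteq> 0"
    and N: "int N > 2 * v (resultant f (pderiv f))"
  shows "{x. poly f x = 0} \<subseteq> valring v \<and>
         bij_betw
           (\<lambda>x. approx_rel v \<pi> N (nat (v (resultant f (pderiv f)))) f `` {red v \<pi> N x})
           {x. poly f x = 0}
           (roots_mod v \<pi> N f // approx_rel v \<pi> N (nat (v (resultant f (pderiv f)))) f) \<and>
         card {x. poly f x = 0} =
           card (roots_mod v \<pi> N f // approx_rel v \<pi> N (nat (v (resultant f (pderiv f)))) f)"
proof -
  interpret hensel_setting v \<pi> f
    using val unif compl coeffA monic disc
    by unfold_locales (auto simp: integral_poly_def valring_eq)
  have bij: "bij_betw
      (\<lambda>x. approx_rel v \<pi> N (nat (v discr)) f `` {red v \<pi> N x}) {x. poly f x = 0}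
      (roots_mod v \<pi> N f // approx_rel v \<pi> N (nat (v discr)) f)"
    using bij_betw_roots_approx_classes N by simp
  moreover have "{x. poly f x = 0} \<subseteq> valring v"
    using roots_integral[OF integral monic] by (auto simp: valring_eq)
  ultimately show ?thesis
    using bij_betw_same_card by blast
qed

end
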